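(* Let $n\in\mathbb{N}=\{1,2,\dots\}$, $0\le i\le n-1$, and $\alpha,\beta\in\mathbb{R}$ such that the Jacobi functions below are defined. Then on $(-1,1)$ $$\int\frac{t^i}{i!}p_n^{(\alpha,\beta)}(t)\,dt=-\sum_{k=0}^i\frac{2^{k+1}\Gamma(n+\alpha+\beta+1)}{\Gamma(n+k+\alpha+\beta+2)}\frac{t^{i-k}}{(i-k)!}p_{n-1-k}^{(\alpha+1+k,\beta+1+k)}(t),$$ i.e. the right-hand side is an antiderivative of $t\mapsto\frac{t^i}{i!}p_n^{(\alpha,\beta)}(t)$.
   Context: The Jacobi polynomials are $P_n^{(\alpha,\beta)}(t)=\sum_{j=0}^n\frac{1}{2^n}\binom{n+\alpha}{n-j}\binom{n+\beta}{j}(t-1)^j(t+1)^{n-j}$. The Jacobi functions on $(-1,1)$ are $$p_n^{(\alpha,\beta)}(t)=\frac{(2n+\alpha+\beta+1)\Gamma(n+\alpha+\beta+1)\,n!}{2^{\alpha+\beta+1}\Gamma(n+\alpha+1)\Gamma(n+\beta+1)}(1-t)^{\alpha}(1+t)^{\beta}P_n^{(\alpha,\beta)}(t)=\frac{(-1)^n(2n+\alpha+\beta+1)\Gamma(n+\alpha+\beta+1)}{2^{n+\alpha+\beta+1}\Gamma(n+\alpha+1)\Gamma(n+\beta+1)}\frac{d^n}{dt^n}\big((1-t)^{n+\alpha}(1+t)^{n+\beta}\big).$$ *)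

theory Defs
  imports "HOL-Analysis.Analysis"
begin

definition jacobiP :: "nat \<Rightarrow> real \<Rightarrow> real \<Rightarrow> real \<Rightarrow> real" where
  "jacobiP n a b t = (\<Sum>j=0..n. (1 / 2^n) * ((real n + a) gchoose (n - j)) * ((real n + b) gchoose j)
       * (t - 1)^j * (t + 1)^(n - j))"

definition jacobi_fun :: "nat \<Rightarrow> real \<Rightarrow> real \<Rightarrow> real \<Rightarrow> real" where
  "jacobi_fun n a b t =
     (2 * real n + a + b + 1) * Gamma (real n + a + b + 1) * fact n
       / (2 powr (a + b + 1) * Gamma (real n + a + 1) * Gamma (real n + b + 1))
     * (1 - t) powr a * (1 + t) powr b * jacobiP n a b t"

end

theory Submission
  imports Defs
begin

text \<open>Expanding \<open>(1-t)^a (1+t)^b P_m^(a,b)(t)\<close> into the weights \<open>(1-t)^(a+j) (1+t)^(b+m-j)\<close>,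
  differentiating termwise and regrouping with the absorption identity for binomial
  coefficients gives the lowering rule \<open>d/dt p_m^(a+1,b+1) = -(m+a+b+2)/2 \<cdot> p_(m+1)^(a,b)\<close>.
  With the product rule and \<open>\<Gamma>(z+1) = z \<Gamma>(z)\<close>, the derivative of the \<open>k\<close>-th summand of the
  claimed antiderivative becomes the difference of two consecutive terms
  \<open>2^k / \<Gamma>(n+k+\<alpha>+\<beta>+1) \<cdot> t^(i-k) / (i-k)! \<cdot> p_(n-k)^(\<alpha>+k,\<beta>+k)(t)\<close>,
  so the sum telescopes to its \<open>k = 0\<close> term.\<close>

definition jacobi_weight :: "real \<Rightarrow> real \<Rightarrow> real \<Rightarrow> real" where
  "jacobi_weight a b t = (1 - t) powr a * (1 + t) powr b"

lemma has_real_derivative_jacobi_weight: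
  assumes "t \<in> {-1<..<1}"
  shows "(jacobi_weight a b has_real_derivative
           b * jacobi_weight a (b - 1) t - a * jacobi_weight (a - 1) b t) (at t)"
  using assms unfolding jacobi_weight_def
  by (auto intro!: derivative_eq_intros simp: algebra_simps)

definition jacobi_coeff :: "nat \<Rightarrow> real \<Rightarrow> real \<Rightarrow> nat \<Rightarrow> real" where
  "jacobi_coeff m a b j = ((real m + a) gchoose (m - j)) * ((real m + b) gchoose j)"

lemma jacobi_coeff_Suc:
  assumes "j \<le> Suc m"
  shows "(real m + 1) * jacobi_coeff (Suc m) a b j =
           (if j \<le> m then (a + 1 + real j) * jacobi_coeff m (a + 1) (b + 1) j else 0)
         + (if j = 0 then 0 else (b + 2 + real m - real j) * jacobi_coeff m (a + 1) (b + 1) (j - 1))"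
proof -
  have absorb: "(r - real k) * (r gchoose k) = real (Suc k) * (r gchoose Suc k)" for r :: real and k
    by (simp only: gbinomial_absorb_comp gbinomial_absorption)
  define R where "R = real m + (a + 1)"
  define S where "S = real m + (b + 1)"
  have RS: "real (Suc m) + a = R" "real (Suc m) + b = S"
    unfolding R_def S_def by simp_all
  consider "j = 0" | "j = Suc m" | l where "j = Suc l" "l < m"
    using assms by (cases j) (auto simp: le_less)
  then show ?thesis
  proof cases
    case 1
    then show ?thesis
      using absorb[of R m] unfolding jacobi_coeff_def RS by (simp add: R_def algebra_simps)
  next
    case 2
    then show ?thesis
      using absorb[of S m] unfolding jacobi_coeff_def RS by (simp add: S_def algebra_simps)
  next
    case 3
    have absorb_R: "(a + 1 + real j) * (R gchoose (m - j)) = real (m - l) * (R gchoose (m - l))"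
      using absorb[of R "m - j"] 3 by (simp add: R_def Suc_diff_Suc algebra_simps)
    have absorb_S: "(b + 2 + real m - real j) * (S gchoose l) = real j * (S gchoose j)"
      using absorb[of S l] 3 by (simp add: S_def algebra_simps)
    have "(a + 1 + real j) * jacobi_coeff m (a + 1) (b + 1) j
          + (b + 2 + real m - real j) * jacobi_coeff m (a + 1) (b + 1) l
        = ((a + 1 + real j) * (R gchoose (m - j))) * (S gchoose j)
          + (R gchoose (m - l)) * ((b + 2 + real m - real j) * (S gchoose l))"
      unfolding jacobi_coeff_def R_def S_def by (simp only: mult_ac)
    also have "\<dots> = (real (m - l) + real j) * (R gchoose (m - l)) * (S gchoose j)"
      unfolding absorb_R absorb_S by (simp only: algebra_simps)
    also have "\<dots> = (real m + 1) * jacobi_coeff (Suc m) a b j"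
      using 3 unfolding jacobi_coeff_def RS by simp
    finally show ?thesis
      using 3 by simp
  qed
qed

definition weighted_jacobiP :: "nat \<Rightarrow> real \<Rightarrow> real \<Rightarrow> real \<Rightarrow> real" where
  "weighted_jacobiP m a b t =
     (\<Sum>j=0..m. (-1)^j * jacobi_coeff m a b j * jacobi_weight (a + real j) (b + real m - real j) t)"

lemma jacobi_weight_mult_jacobiP:
  assumes "t \<in> {-1<..<1}"
  shows "jacobi_weight a b t * jacobiP m a b t = weighted_jacobiP m a b t / 2^m"
  unfolding jacobiP_def weighted_jacobiP_def sum_distrib_left sum_divide_distrib
proof (rule sum.cong[OF refl])
  fix j assume "j \<in> {0..m}"
  then have exponent: "b + real m - real j = b + real (m - j)"
    by simp
  then have "jacobi_weight (a + real j) (b + real m - real j) t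
          = jacobi_weight a b t * (1 - t)^j * (1 + t)^(m - j)"
    using assms unfolding jacobi_weight_def exponent by (simp add: powr_add powr_realpow)
  moreover have "(t - 1)^j = (-1)^j * (1 - t)^j"
    by (simp flip: power_mult_distrib)
  ultimately show "jacobi_weight a b t * (1 / 2^m * ((real m + a) gchoose (m - j))
        * ((real m + b) gchoose j) * (t - 1)^j * (t + 1)^(m - j))
      = (-1)^j * jacobi_coeff m a b j * jacobi_weight (a + real j) (b + real m - real j) t / 2^m"
    by (simp add: jacobi_coeff_def algebra_simps)
qed

lemma Suc_mult_weighted_jacobiP:
  "(real m + 1) * weighted_jacobiP (Suc m) a b t =
     (\<Sum>j=0..m. (-1)^j * jacobi_coeff m (a + 1) (b + 1) j *
        ((a + 1 + real j) * jacobi_weight (a + real j) (b + real (Suc m) - real j) t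
         - (b + 1 + real m - real j) * jacobi_weight (a + real (Suc j)) (b + real (Suc m) - real (Suc j)) t))"
proof -
  define c where "c = jacobi_coeff m (a + 1) (b + 1)"
  define G where "G j = jacobi_weight (a + real j) (b + real (Suc m) - real j) t" for j
  have "(real m + 1) * weighted_jacobiP (Suc m) a b t =
      (\<Sum>j=0..Suc m. (-1)^j * ((if j \<le> m then (a + 1 + real j) * c j else 0)
         + (if j = 0 then 0 else (b + 2 + real m - real j) * c (j - 1))) * G j)"
    unfolding weighted_jacobiP_def sum_distrib_left
    by (intro sum.cong refl) (simp add: jacobi_coeff_Suc c_def G_def flip: mult.assoc)
  also have "\<dots> = (\<Sum>j=0..m. (-1)^j * (a + 1 + real j) * c j * G j)
      + (\<Sum>j=0..m. (-1)^Suc j * (b + 1 + real m - real j) * c j * G (Suc j))"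
  proof -
    have "(\<Sum>j=0..Suc m. (-1)^j * (if j \<le> m then (a + 1 + real j) * c j else 0) * G j)
        = (\<Sum>j=0..m. (-1)^j * (a + 1 + real j) * c j * G j)"
      by (simp add: sum.atLeast0_atMost_Suc mult_ac)
    moreover have "(\<Sum>j=0..Suc m. (-1)^j * (if j = 0 then 0 else (b + 2 + real m - real j) * c (j - 1)) * G j)
        = (\<Sum>j=0..m. (-1)^Suc j * (b + 1 + real m - real j) * c j * G (Suc j))"
      by (subst sum.atLeast0_atMost_Suc_shift) (simp add: algebra_simps)
    ultimately show ?thesis
      by (simp add: distrib_left distrib_right sum.distrib)
  qed
  also have "\<dots> = (\<Sum>j=0..m. (-1)^j * c j * ((a + 1 + real j) * G j - (b + 1 + real m - real j) * G (Suc j)))"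
    unfolding sum.distrib[symmetric] by (intro sum.cong refl) (simp add: algebra_simps)
  finally show ?thesis
    by (simp only: c_def G_def)
qed

lemma has_real_derivative_weighted_jacobiP:
  assumes "t \<in> {-1<..<1}"
  shows "(weighted_jacobiP m (a + 1) (b + 1) has_real_derivative
           - (real m + 1) * weighted_jacobiP (Suc m) a b t) (at t)"
proof -
  define c where "c = jacobi_coeff m (a + 1) (b + 1)"
  have "- (real m + 1) * weighted_jacobiP (Suc m) a b t =
      (\<Sum>j=0..m. (-1)^j * c j *
         ((b + 1 + real m - real j) * jacobi_weight (a + 1 + real j) (b + 1 + real m - real j - 1) t
          - (a + 1 + real j) * jacobi_weight (a + 1 + real j - 1) (b + 1 + real m - real j) t))"
    unfolding mult_minus_left Suc_mult_weighted_jacobiP sum_negf[symmetric] c_def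
    by (intro sum.cong refl) (simp add: algebra_simps)
  then show ?thesis
    unfolding weighted_jacobiP_def c_def
    by (simp only:) (intro DERIV_sum DERIV_cmult has_real_derivative_jacobi_weight assms)
qed

definition jacobi_norm :: "nat \<Rightarrow> real \<Rightarrow> real \<Rightarrow> real" where
  "jacobi_norm m a b =
     (2 * real m + a + b + 1) * Gamma (real m + a + b + 1) * fact m
       / (2 powr (a + b + 1) * Gamma (real m + a + 1) * Gamma (real m + b + 1))"

lemma jacobi_fun_eq_weighted_jacobiP:
  assumes "t \<in> {-1<..<1}"
  shows "jacobi_fun m a b t = jacobi_norm m a b / 2^m * weighted_jacobiP m a b t"
  using jacobi_weight_mult_jacobiP[OF assms, of a b m]
  unfolding jacobi_fun_def jacobi_norm_def jacobi_weight_def by (simp add: mult.assoc)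

lemma jacobi_norm_Suc:
  assumes "real m + a + b + 2 \<notin> \<int>\<^sub>\<le>\<^sub>0"
  shows "(real m + 1) * jacobi_norm m (a + 1) (b + 1) / 2^m
           = (real m + a + b + 2) / 2 * jacobi_norm (Suc m) a b / 2^Suc m"
proof -
  have "Gamma (real m + a + b + 3) = (real m + a + b + 2) * Gamma (real m + a + b + 2)"
    using Gamma_plus1[OF assms] by (simp add: add.assoc)
  moreover have "2 powr (a + 1 + (b + 1) + 1) = 4 * 2 powr (a + b + 1)"
    by (simp add: powr_add add_ac)
  ultimately show ?thesis
    unfolding jacobi_norm_def by (simp add: field_simps)
qed

lemma has_real_derivative_jacobi_fun:
  assumes t: "t \<in> {-1<..<1}" and nonpole: "real m + a + b + 2 \<notin> \<int>\<^sub>\<le>\<^sub>0"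
  shows "(jacobi_fun m (a + 1) (b + 1) has_real_derivative
           - ((real m + a + b + 2) / 2) * jacobi_fun (Suc m) a b t) (at t)"
proof -
  define c where "c = jacobi_norm m (a + 1) (b + 1) / 2^m"
  have "((\<lambda>s. c * weighted_jacobiP m (a + 1) (b + 1) s) has_real_derivative
          c * (- (real m + 1) * weighted_jacobiP (Suc m) a b t)) (at t)"
    by (intro DERIV_cmult has_real_derivative_weighted_jacobiP t)
  then have deriv: "(jacobi_fun m (a + 1) (b + 1) has_real_derivative
          c * (- (real m + 1) * weighted_jacobiP (Suc m) a b t)) (at t)"
    by (rule has_field_derivative_transform_within_open[where S = "{-1<..<1}"])
       (use t in \<open>simp_all add: c_def jacobi_fun_eq_weighted_jacobiP\<close>)
  have "c * (- (real m + 1) * weighted_jacobiP (Suc m) a b t)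
      = - ((real m + 1) * jacobi_norm m (a + 1) (b + 1) / 2^m * weighted_jacobiP (Suc m) a b t)"
    by (simp add: c_def field_simps)
  also have "\<dots> = - ((real m + a + b + 2) / 2) * jacobi_fun (Suc m) a b t"
    unfolding jacobi_norm_Suc[OF nonpole] jacobi_fun_eq_weighted_jacobiP[OF t] by simp
  finally show ?thesis
    using deriv by simp
qed

definition jacobi_moment_term :: "nat \<Rightarrow> nat \<Rightarrow> real \<Rightarrow> real \<Rightarrow> nat \<Rightarrow> real \<Rightarrow> real" where
  "jacobi_moment_term n i a b k t =
     (if k \<le> i then 2^k / Gamma (real n + real k + a + b + 1) * t^(i - k) / fact (i - k)
                     * jacobi_fun (n - k) (a + real k) (b + real k) t
      else 0)"

lemma has_real_derivative_jacobi_moment_summand: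
  assumes t: "t \<in> {-1<..<1}" and "k \<le> i" and "i < n"
    and nonpole: "real n + real k + a + b + 1 \<notin> \<int>\<^sub>\<le>\<^sub>0"
  shows "((\<lambda>s. 2^(k + 1) / Gamma (real n + real k + a + b + 2) * s^(i - k) / fact (i - k)
                * jacobi_fun (n - 1 - k) (a + 1 + real k) (b + 1 + real k) s)
          has_real_derivative jacobi_moment_term n i a b (Suc k) t - jacobi_moment_term n i a b k t) (at t)"
proof -
  define z where "z = real n + real k + a + b + 1"
  define C where "C = 2^(k + 1) / Gamma (z + 1)"
  define J where "J = jacobi_fun (n - 1 - k) (a + real k + 1) (b + real k + 1)"
  have z: "real (n - 1 - k) + (a + real k) + (b + real k) + 2 = z" "Suc (n - 1 - k) = n - k"
    using assms(2,3) by (auto simp: z_def)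
  have "(J has_real_derivative - (z / 2) * jacobi_fun (n - k) (a + real k) (b + real k) t) (at t)"
    using has_real_derivative_jacobi_fun[OF t, of "n - 1 - k" "a + real k" "b + real k"] nonpole
    unfolding J_def z z_def by simp
  then have "((\<lambda>s. C * s^(i - k) / fact (i - k) * J s) has_real_derivative
      C * (real (i - k) * t^(i - k - 1)) / fact (i - k) * J t
      - C * t^(i - k) / fact (i - k) * (z / 2) * jacobi_fun (n - k) (a + real k) (b + real k) t) (at t)"
    by (auto intro!: derivative_eq_intros simp: field_simps)
  moreover have "C * (real (i - k) * t^(i - k - 1)) / fact (i - k) * J t = jacobi_moment_term n i a b (Suc k) t"
  proof (cases "k < i")
    case True
    then have ratio: "real (i - k) / fact (i - k) = 1 / fact (i - Suc k)"
      by (simp add: fact_reduce[of "i - k"] Suc_diff_Suc)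
    have "C * (real (i - k) * t^(i - k - 1)) / fact (i - k) * J t
            = C * (1 / fact (i - Suc k)) * t^(i - Suc k) * J t"
      by (simp flip: ratio)
    also have "\<dots> = jacobi_moment_term n i a b (Suc k) t"
      using True unfolding jacobi_moment_term_def C_def J_def z_def by (simp add: algebra_simps)
    finally show ?thesis .
  qed (use assms(2) in \<open>simp add: jacobi_moment_term_def\<close>)
  moreover have "C * t^(i - k) / fact (i - k) * (z / 2) * jacobi_fun (n - k) (a + real k) (b + real k) t
                   = jacobi_moment_term n i a b k t"
  proof -
    have "Gamma (z + 1) = z * Gamma z" and "z \<noteq> 0"
      using Gamma_plus1[of z] nonpole unfolding z_def by auto
    then have "C * (z / 2) = 2^k / Gamma z"
      unfolding C_def by (simp add: field_simps)
    then have "C * t^(i - k) / fact (i - k) * (z / 2) = 2^k / Gamma z * t^(i - k) / fact (i - k)"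
      by (metis mult.commute mult.left_commute times_divide_eq_left)
    then show ?thesis
      using assms(2) unfolding jacobi_moment_term_def z_def by simp
  qed
  ultimately show ?thesis
    unfolding C_def J_def z_def by (simp add: algebra_simps)
qed

theorem lemma4p4:
  fixes n i :: nat and \<alpha> \<beta> :: real
  assumes "1 \<le> n" and "i \<le> n - 1"
    and "real n + \<alpha> + 1 \<notin> \<int>\<^sub>\<le>\<^sub>0"
    and "real n + \<beta> + 1 \<notin> \<int>\<^sub>\<le>\<^sub>0"
    and "real n + \<alpha> + \<beta> + 1 \<notin> \<int>\<^sub>\<le>\<^sub>0"
    and "\<And>k. k \<le> i \<Longrightarrow> real n + real k + \<alpha> + \<beta> + 2 \<notin> \<int>\<^sub>\<le>\<^sub>0"
  shows "\<forall>t\<in>{-1<..<1::real}.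
    ((\<lambda>s. - (\<Sum>k=0..i. 2^(k+1) * Gamma (real n + \<alpha> + \<beta> + 1) / Gamma (real n + real k + \<alpha> + \<beta> + 2)
              * s^(i - k) / fact (i - k)
              * jacobi_fun (n - 1 - k) (\<alpha> + 1 + real k) (\<beta> + 1 + real k) s))
      has_real_derivative (t^i / fact i * jacobi_fun n \<alpha> \<beta> t)) (at t)"
proof
  fix t :: real assume t: "t \<in> {-1<..<1}"
  define G where "G = Gamma (real n + \<alpha> + \<beta> + 1)"
  define T where "T k = jacobi_moment_term n i \<alpha> \<beta> k t" for k
  have nonpole: "real n + real k + \<alpha> + \<beta> + 1 \<notin> \<int>\<^sub>\<le>\<^sub>0" if "k \<le> i" for k
    using that assms(5) assms(6)[of "k - 1"] by (cases k) (auto simp: add_ac)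
  have "((\<lambda>s. - (\<Sum>k=0..i. G * (2^(k + 1) / Gamma (real n + real k + \<alpha> + \<beta> + 2) * s^(i - k) / fact (i - k)
                * jacobi_fun (n - 1 - k) (\<alpha> + 1 + real k) (\<beta> + 1 + real k) s)))
        has_real_derivative - (\<Sum>k=0..i. G * (T (Suc k) - T k))) (at t)"
    using assms(1,2) unfolding T_def
    by (intro DERIV_minus DERIV_sum DERIV_cmult has_real_derivative_jacobi_moment_summand t nonpole) auto
  moreover have "(\<Sum>k=0..i. G * (T (Suc k) - T k)) = G * (T (Suc i) - T 0)"
    unfolding sum_distrib_left[symmetric] by (subst sum_Suc_diff) simp_all
  moreover have "G * T 0 = t^i / fact i * jacobi_fun n \<alpha> \<beta> t" "T (Suc i) = 0"
    using Gamma_nonzero[OF assms(5)] by (simp_all add: T_def jacobi_moment_term_def G_def)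
  ultimately show "((\<lambda>s. - (\<Sum>k=0..i. 2^(k+1) * Gamma (real n + \<alpha> + \<beta> + 1) / Gamma (real n + real k + \<alpha> + \<beta> + 2)
              * s^(i - k) / fact (i - k)
              * jacobi_fun (n - 1 - k) (\<alpha> + 1 + real k) (\<beta> + 1 + real k) s))
      has_real_derivative (t^i / fact i * jacobi_fun n \<alpha> \<beta> t)) (at t)"
    by (simp add: G_def mult_ac)
qed

end
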